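(* Let $|p|<1$ and let $a,b,c,d,q,r,s,t$ be nonzero complex numbers such that all expressions below are well defined. Then for every integer $n\ge0$, \begin{align*} &\sum_{k=0}^n\frac{\theta\big(ad(rst/q)^k,\,br^k/(dq^k),\,cs^k/(dq^k),\,adt^k/(bcq^k);p\big)}{\theta\big(ad,\,b/d,\,c/d,\,ad/(bc);p\big)}\\ &\qquad\times\frac{(a;rst/q^2,p)_k(b;r,p)_k(c;s,p)_k(ad^2/(bc);t,p)_k}{(dq;q,p)_k(adst/(bq);st/q,p)_k(adrt/(cq);rt/q,p)_k(bcrs/(dq);rs/q,p)_k}\,q^k\\ &=\frac{\theta(a,b,c,ad^2/(bc);p)}{d\,\theta(ad,b/d,c/d,ad/(bc);p)}\cdot\frac{(arst/q^2;rst/q^2,p)_n(br;r,p)_n(cs;s,p)_n(ad^2t/(bc);t,p)_n}{(dq;q,p)_n(adst/(bq);st/q,p)_n(adrt/(cq);rt/q,p)_n(bcrs/(dq);rs/q,p)_n}\\ &\quad-\frac{\theta(d,ad/b,ad/c,bc/d;p)}{d\,\theta(ad,b/d,c/d,ad/(bc);p)}. \end{align*}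
   Context: For $|p|<1$ and $x\neq 0$, $\theta(x;p)=(x;p)_\infty(p/x;p)_\infty$ where $(x;p)_\infty=\prod_{k\ge 0}(1-xp^k)$, and $\theta(x_1,\dots,x_m;p)=\prod_{i=1}^m\theta(x_i;p)$. For $a\ne0$ and integer $k\ge0$, $(a;q,p)_k=\prod_{j=0}^{k-1}\theta(aq^j;p)$ (empty product $=1$). Here e.g. $rst/q^2$ denotes $rst/(q^2)$ and $(rst/q)^k=(rst/q)^k$. *)

theory Defs
  imports "HOL-Analysis.Analysis"
begin

definition qpoch_inf :: "complex \<Rightarrow> complex \<Rightarrow> complex" where
  "qpoch_inf x p = (\<Prod>k. (1 - x * p ^ k))"

definition theta :: "complex \<Rightarrow> complex \<Rightarrow> complex" where
  "theta x p = qpoch_inf x p * qpoch_inf (p / x) p"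

definition etheta_poch :: "complex \<Rightarrow> complex \<Rightarrow> complex \<Rightarrow> nat \<Rightarrow> complex" where
  "etheta_poch a q p k = (\<Prod>j<k. theta (a * q ^ j) p)"

end

theory Submission
  imports Defs
begin

text \<open>
  Let \<open>X k = \<theta>(a (rst/q^2)^k, b r^k, c s^k, a d^2 t^k/(bc))\<close> and
  \<open>Y k = \<theta>(d q^k, ad (st/q)^k/b, ad (rt/q)^k/c, bc (rs/q)^k/d)\<close>. Weierstrass' addition
  formula \<open>\<theta>(a, b, c, ad^2/(bc)) - \<theta>(d, ad/b, ad/c, bc/d) = d \<theta>(ad, b/d, c/d, ad/(bc))\<close>,
  applied at \<open>(a (rst/q^2)^k, b r^k, c s^k, d q^k)\<close>, says that \<open>X k - Y k\<close> is \<open>d q^k\<close> times the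
  theta quotient of the \<open>k\<close>-th summand. The shifted factorials in the summand are
  \<open>X 0 \<cdots> X (k-1)\<close> over \<open>Y 1 \<cdots> Y k\<close>, so the sum telescopes.

  The addition formula follows from the Jacobi triple product
  \<open>(p;p)\<^sub>\<infinity> \<theta>(z;p) = \<Sum>\<^sub>n (-1)^n p^(n(n-1)/2) z^n\<close>, which is the limit, by Tannery's
  theorem, of the q-binomial expansion of \<open>(z;p)\<^sub>N (p/z;p)\<^sub>N\<close>. Splitting the product of two
  such series according to the parity of \<open>n - m\<close> expresses \<open>\<theta>(x) \<theta>(y)\<close> through theta
  series in \<open>p^2\<close> at \<open>xy\<close> and \<open>x/y\<close>; the addition formula then reduces to a polynomial
  identity between such values.
\<close>

section \<open>Finite q-Pochhammer symbols and Gaussian binomial coefficients\<close>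

definition qpoch :: "'a::comm_ring_1 \<Rightarrow> 'a \<Rightarrow> nat \<Rightarrow> 'a" where
  "qpoch x q n = (\<Prod>k<n. 1 - x * q ^ k)"

lemma qpoch_0 [simp]: "qpoch x q 0 = 1"
  by (simp add: qpoch_def)

lemma qpoch_Suc: "qpoch x q (Suc n) = qpoch x q n * (1 - x * q ^ n)"
  by (simp add: qpoch_def)

lemma qpoch_Suc_shift: "qpoch x q (Suc n) = (1 - x) * qpoch (x * q) q n"
  unfolding qpoch_def by (subst prod.lessThan_Suc_shift) (simp add: mult.assoc)

lemma qpoch_add: "qpoch x q (m + n) = qpoch x q m * qpoch (x * q ^ m) q n"
  by (induction n) (simp_all add: qpoch_Suc power_add algebra_simps)

lemma qpoch_q_nonzero:
  fixes q :: "'a::real_normed_field"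
  assumes "norm q < 1"
  shows "qpoch q q n \<noteq> 0"
proof -
  have "norm (q * q ^ k) < 1" for k
  proof -
    have "norm (q * q ^ k) = norm q ^ Suc k"
      by (simp add: norm_mult norm_power)
    also have "\<dots> < 1"
      using assms by (intro power_less_one_iff[THEN iffD2]) auto
    finally show ?thesis .
  qed
  then have "q * q ^ k \<noteq> 1" for k
    by (metis norm_one order.irrefl)
  then show ?thesis by (simp add: qpoch_def)
qed

lemma convergent_prod_qpoch:
  fixes x q :: complex
  assumes "norm q < 1"
  shows "convergent_prod (\<lambda>k. 1 - x * q ^ k)"
proof -
  have "summable (\<lambda>k. norm x * norm q ^ k)"
    using assms by (intro summable_mult summable_geometric) auto
  then have "summable (\<lambda>k. norm ((1 - x * q ^ k) - 1))"
    by (simp add: norm_mult norm_power)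
  then show ?thesis
    by (intro abs_convergent_prod_imp_convergent_prod summable_imp_abs_convergent_prod)
qed

lemma qpoch_LIMSEQ:
  assumes "norm q < 1"
  shows "qpoch x q \<longlonglongrightarrow> qpoch_inf x q"
proof -
  have "(\<lambda>n. qpoch x q (Suc n)) \<longlonglongrightarrow> qpoch_inf x q"
    using convergent_prod_LIMSEQ[OF convergent_prod_qpoch[OF assms]]
    by (simp add: qpoch_def qpoch_inf_def lessThan_Suc_atMost)
  then show ?thesis
    by (rule LIMSEQ_imp_Suc)
qed

lemma theta_LIMSEQ:
  assumes "norm q < 1"
  shows "(\<lambda>n. qpoch x q n * qpoch (q / x) q n) \<longlonglongrightarrow> theta x q"
  unfolding theta_def by (intro tendsto_mult qpoch_LIMSEQ assms)

lemma qpoch_inf_q_nonzero: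
  assumes "norm q < 1"
  shows "qpoch_inf q q \<noteq> 0"
  unfolding qpoch_inf_def
proof (rule prodinf_nonzero[OF convergent_prod_qpoch[OF assms]])
  show "1 - q * q ^ k \<noteq> 0" for k
    using qpoch_q_nonzero[OF assms, of "Suc k"] by (simp add: qpoch_def)
qed

lemma theta_zero_nome: "theta x 0 = 1 - x"
proof -
  have "qpoch_inf y 0 = 1 - y" for y :: complex
  proof -
    have "qpoch_inf y 0 = (\<Prod>k\<in>{0}. 1 - y * 0 ^ k)"
      unfolding qpoch_inf_def by (rule prodinf_finite) auto
    then show ?thesis by simp
  qed
  then show ?thesis by (simp add: theta_def)
qed

fun qbinom :: "'a::comm_semiring_1 \<Rightarrow> nat \<Rightarrow> nat \<Rightarrow> 'a" where
  "qbinom q n 0 = 1"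
| "qbinom q 0 (Suc k) = 0"
| "qbinom q (Suc n) (Suc k) = qbinom q n k + q ^ Suc k * qbinom q n (Suc k)"

lemma qbinom_eq_0: "n < k \<Longrightarrow> qbinom q n k = 0"
proof (induction n arbitrary: k)
  case 0
  then show ?case by (cases k) auto
next
  case (Suc n)
  then show ?case by (cases k) auto
qed

lemma choose_two_Suc: "Suc n choose 2 = (n choose 2) + n"
  by (simp add: numeral_2_eq_2)

theorem qbinomial_theorem:
  fixes z q :: "'a::comm_ring_1"
  shows "qpoch z q n = (\<Sum>k\<le>n. qbinom q n k * (-1) ^ k * q ^ (k choose 2) * z ^ k)"
proof (induction n arbitrary: z)
  case 0
  then show ?case by (simp add: numeral_2_eq_2)
next
  case (Suc n)
  define c where "c k = qbinom q n k * (-1) ^ k * q ^ (Suc k choose 2)" for k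
  have c_diff: "c (Suc k) - c k = qbinom q (Suc n) (Suc k) * (-1) ^ Suc k * q ^ (Suc k choose 2)" for k
    by (simp add: c_def choose_two_Suc power_add algebra_simps)
  have "qpoch z q (Suc n) = (1 - z) * (\<Sum>k\<le>n. c k * z ^ k)"
    by (simp add: qpoch_Suc_shift Suc.IH c_def choose_two_Suc power_add power_mult_distrib mult_ac)
  also have "\<dots> = (\<Sum>k\<le>n. c k * z ^ k) - z * (\<Sum>k\<le>n. c k * z ^ k)"
    by (simp only: left_diff_distrib mult_1_left)
  also have "z * (\<Sum>k\<le>n. c k * z ^ k) = (\<Sum>k\<le>n. c k * z ^ Suc k)"
    by (simp add: sum_distrib_left mult_ac)
  also have "(\<Sum>k\<le>n. c k * z ^ k) = (\<Sum>k\<le>Suc n. c k * z ^ k)"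
    by (simp add: c_def qbinom_eq_0)
  also have "\<dots> = 1 + (\<Sum>k\<le>n. c (Suc k) * z ^ Suc k)"
    by (subst sum.atMost_Suc_shift) (simp add: c_def numeral_2_eq_2)
  also have "1 + (\<Sum>k\<le>n. c (Suc k) * z ^ Suc k) - (\<Sum>k\<le>n. c k * z ^ Suc k)
      = 1 + (\<Sum>k\<le>n. qbinom q (Suc n) (Suc k) * (-1) ^ Suc k * q ^ (Suc k choose 2) * z ^ Suc k)"
    by (simp add: sum_subtractf[symmetric] left_diff_distrib[symmetric] c_diff)
  also have "\<dots> = (\<Sum>k\<le>Suc n. qbinom q (Suc n) k * (-1) ^ k * q ^ (k choose 2) * z ^ k)"
    by (subst sum.atMost_Suc_shift) (simp add: numeral_2_eq_2)
  finally show ?case .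
qed

lemma qbinom_mult_qpoch:
  assumes "k \<le> n"
  shows "qbinom q n k * qpoch q q k * qpoch q q (n - k) = qpoch q q n"
  using assms
proof (induction n arbitrary: k)
  case 0
  then show ?case by simp
next
  case (Suc n)
  show ?case
  proof (cases k)
    case 0
    then show ?thesis by simp
  next
    case (Suc j)
    with Suc.prems have "j \<le> n" by simp
    have left: "qbinom q n j * qpoch q q (Suc j) * qpoch q q (n - j) = qpoch q q n * (1 - q ^ Suc j)"
      using Suc.IH[OF \<open>j \<le> n\<close>] by (simp add: qpoch_Suc algebra_simps)
    have right: "qbinom q n (Suc j) * qpoch q q (Suc j) * qpoch q q (n - j)
        = qpoch q q n * (1 - q ^ (n - j))"
    proof (cases "j = n")
      case True
      then show ?thesis by (simp add: qbinom_eq_0)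
    next
      case False
      with \<open>j \<le> n\<close> have "Suc j \<le> n" by simp
      then have "n - j = Suc (n - Suc j)" by simp
      then have "qbinom q n (Suc j) * qpoch q q (Suc j) * qpoch q q (n - j)
          = qbinom q n (Suc j) * qpoch q q (Suc j) * qpoch q q (n - Suc j) * (1 - q ^ (n - j))"
        by (simp add: qpoch_Suc mult.assoc)
      then show ?thesis
        by (simp only: Suc.IH[OF \<open>Suc j \<le> n\<close>])
    qed
    have "Suc j + (n - j) = Suc n"
      using \<open>j \<le> n\<close> by simp
    then have pow: "q ^ Suc j * q ^ (n - j) = q * q ^ n"
      by (metis power_add power_Suc)
    have "qbinom q (Suc n) k * qpoch q q k * qpoch q q (Suc n - k)
        = qbinom q n j * qpoch q q (Suc j) * qpoch q q (n - j)
          + q ^ Suc j * (qbinom q n (Suc j) * qpoch q q (Suc j) * qpoch q q (n - j))"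
      by (simp add: Suc algebra_simps)
    also have "\<dots> = qpoch q q n * (1 - q ^ Suc j) + q ^ Suc j * (qpoch q q n * (1 - q ^ (n - j)))"
      by (simp only: left right)
    also have "\<dots> = qpoch q q n * (1 - q ^ Suc j * q ^ (n - j))"
      by (simp add: algebra_simps)
    also have "\<dots> = qpoch q q (Suc n)"
      by (subst pow) (simp add: qpoch_Suc)
    finally show ?thesis .
  qed
qed

lemma qbinom_eq_qpoch_divide:
  fixes q :: "'a::real_normed_field"
  assumes "norm q < 1" "k \<le> n"
  shows "qbinom q n k = qpoch q q n / (qpoch q q k * qpoch q q (n - k))"
  using qbinom_mult_qpoch[OF assms(2), of q] qpoch_q_nonzero[OF assms(1)]
  by (simp add: field_simps)

lemma qbinom_bounded:
  fixes q :: complex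
  assumes "norm q < 1"
  obtains B where "\<And>n k. norm (qbinom q n k) \<le> B"
proof -
  have "Bseq (qpoch q q)"
    by (rule convergent_imp_Bseq[OF convergentI[OF qpoch_LIMSEQ[OF assms]]])
  then obtain B1 where B1: "\<And>n. norm (qpoch q q n) \<le> B1"
    by (metis BseqE)
  then have "0 \<le> B1"
    by (rule order_trans[OF norm_ge_zero])
  have "(\<lambda>n. inverse (qpoch q q n)) \<longlonglongrightarrow> inverse (qpoch_inf q q)"
    by (intro tendsto_inverse qpoch_LIMSEQ qpoch_inf_q_nonzero assms)
  then have "Bseq (\<lambda>n. inverse (qpoch q q n))"
    by (rule convergent_imp_Bseq[OF convergentI])
  then obtain B2 where B2: "\<And>n. norm (inverse (qpoch q q n)) \<le> B2"
    by (metis BseqE)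
  have "norm (qbinom q n k) \<le> B1 * (B2 * B2)" for n k
  proof (cases "k \<le> n")
    case True
    then have "norm (qbinom q n k)
        = norm (qpoch q q n) * (norm (inverse (qpoch q q k)) * norm (inverse (qpoch q q (n - k))))"
      by (simp add: qbinom_eq_qpoch_divide[OF assms] norm_divide norm_mult norm_inverse divide_inverse)
    also have "\<dots> \<le> B1 * (B2 * B2)"
      by (intro mult_mono B1 B2) (auto intro: order_trans[OF norm_ge_zero B2] \<open>0 \<le> B1\<close>)
    finally show ?thesis .
  next
    case False
    have "0 \<le> B1 * (B2 * B2)"
      using \<open>0 \<le> B1\<close> order_trans[OF norm_ge_zero B2] by simp
    with False show ?thesis by (simp add: qbinom_eq_0)
  qed
  then show ?thesis by (rule that)
qed

lemma qbinom_tendsto: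
  assumes "norm q < 1"
    and f: "filterlim f at_top F" and g: "filterlim g at_top F"
  shows "((\<lambda>N. qbinom q (f N + g N) (f N)) \<longlongrightarrow> 1 / qpoch_inf q q) F"
proof -
  have "filterlim (\<lambda>N. f N + g N) at_top F"
    by (rule filterlim_at_top_mono[OF f]) auto
  then have "((\<lambda>N. qpoch q q (f N + g N) / (qpoch q q (f N) * qpoch q q (g N)))
      \<longlongrightarrow> qpoch_inf q q / (qpoch_inf q q * qpoch_inf q q)) F"
    using qpoch_inf_q_nonzero[OF assms(1)]
    by (intro tendsto_divide tendsto_mult filterlim_compose[OF qpoch_LIMSEQ[OF assms(1)]] f g) auto
  then show ?thesis
    using qpoch_inf_q_nonzero[OF assms(1)] by (simp add: qbinom_eq_qpoch_divide[OF assms(1)])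
qed

section \<open>The Jacobi triple product\<close>

definition jacobi_term :: "complex \<Rightarrow> complex \<Rightarrow> int \<Rightarrow> complex" where
  "jacobi_term q z n = (-1) powi n * q powi (n * (n - 1) div 2) * z powi n"

lemma double_mult_pred_div_2: "2 * (n * (n - 1) div 2) = n * (n - 1)" for n :: int
  by simp

lemma int_choose_two: "int (n choose 2) = int n * (int n - 1) div 2"
  by (cases n) (simp_all add: choose_two zdiv_int algebra_simps)

lemma jacobi_term_of_nat: "jacobi_term q z (int n) = (-1) ^ n * q ^ (n choose 2) * z ^ n"
  by (simp add: jacobi_term_def int_choose_two[symmetric])

lemma jacobi_term_uminus:
  assumes "q \<noteq> 0" "z \<noteq> 0"
  shows "jacobi_term q z (- n) = jacobi_term q (q / z) n"
proof -
  have "- n * (- n - 1) div 2 = n * (n - 1) div 2 + n"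
    using double_mult_pred_div_2[of n] double_mult_pred_div_2[of "- n"] by (simp add: algebra_simps)
  with assms show ?thesis
    by (simp add: jacobi_term_def power_int_add power_int_minus power_int_divide_distrib field_simps)
qed

lemma qpoch_reciprocal_mult_power:
  fixes q x :: "'a::field"
  assumes "q \<noteq> 0" "x \<noteq> 0"
  shows "qpoch (q / x) q N * x ^ N = (-1) ^ N * q ^ (Suc N choose 2) * (\<Prod>k<N. 1 - x / q ^ Suc k)"
proof (induction N)
  case 0
  then show ?case by (simp add: numeral_2_eq_2)
next
  case (Suc N)
  have "qpoch (q / x) q (Suc N) * x ^ Suc N = (qpoch (q / x) q N * x ^ N) * ((1 - q / x * q ^ N) * x)"
    by (simp add: qpoch_Suc mult_ac)
  also have "(1 - q / x * q ^ N) * x = - (q ^ Suc N) * (1 - x / q ^ Suc N)"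
    using assms by (simp add: field_simps)
  also note Suc.IH
  finally show ?case
    by (simp add: choose_two_Suc[of "Suc N"] power_add algebra_simps)
qed

lemma qpoch_div_power_double:
  fixes q x :: "'a::field"
  assumes "q \<noteq> 0"
  shows "qpoch (x / q ^ N) q (N + N) = (\<Prod>k<N. 1 - x / q ^ Suc k) * qpoch x q N"
proof -
  have "qpoch (x / q ^ N) q N = (\<Prod>k<N. 1 - x / q ^ N * q ^ (N - Suc k))"
    unfolding qpoch_def by (rule prod.nat_diff_reindex[symmetric])
  also have "\<dots> = (\<Prod>k<N. 1 - x / q ^ Suc k)"
  proof (rule prod.cong)
    fix k
    assume "k \<in> {..<N}"
    then have "N = Suc k + (N - Suc k)"
      by simp
    then have "q ^ N = q ^ Suc k * q ^ (N - Suc k)"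
      by (metis power_add)
    then show "1 - x / q ^ N * q ^ (N - Suc k) = 1 - x / q ^ Suc k"
      using assms by (simp add: field_simps)
  qed simp
  finally show ?thesis
    using assms by (simp add: qpoch_add)
qed

lemma jacobi_term_of_nat_diff:
  assumes "q \<noteq> 0" "x \<noteq> 0"
  shows "(-1) ^ N * q ^ (Suc N choose 2) * ((-1) ^ k * q ^ (k choose 2) * (x / q ^ N) ^ k) / x ^ N
      = jacobi_term q x (int k - int N)"
proof -
  define e where "e = int k - int N"
  have "2 * (e * (e - 1) div 2) = 2 * (int (Suc N choose 2) + int (k choose 2) - int (N * k))"
    unfolding e_def int_choose_two double_mult_pred_div_2 by (simp add: algebra_simps)
  then have "e * (e - 1) div 2 = int (Suc N choose 2) + int (k choose 2) - int (N * k)"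
    by (simp only: mult_cancel_left) simp
  then have q_part: "q powi (e * (e - 1) div 2) = q ^ (Suc N choose 2) * q ^ (k choose 2) / q ^ (N * k)"
    using assms by (metis power_int_add power_int_diff power_int_of_nat)
  have sign_part: "(-1) powi e = (-1::complex) ^ N * (-1) ^ k"
    by (simp add: e_def power_int_diff field_simps)
  have x_part: "x powi e = x ^ k / x ^ N"
    using assms by (simp add: e_def power_int_diff)
  have "(x / q ^ N) ^ k = x ^ k / q ^ (N * k)"
    by (simp add: power_divide power_mult)
  then show ?thesis
    unfolding jacobi_term_def e_def[symmetric] q_part sign_part x_part by (simp add: field_simps power_mult)
qed

text \<open>Reversing the factors of \<open>(q/x;q)\<^sub>N\<close> turns the product into a monomial times
  \<open>(x q\<^sup>-\<^sup>N;q)\<^sub>2\<^sub>N\<close>, which the q-binomial theorem expands.\<close>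

lemma finite_triple_product:
  assumes "q \<noteq> 0" "x \<noteq> 0"
  shows "qpoch x q N * qpoch (q / x) q N
      = (\<Sum>k\<le>N + N. qbinom q (N + N) k * jacobi_term q x (int k - int N))"
proof -
  define c where "c = (-1) ^ N * q ^ (Suc N choose 2)"
  have "qpoch x q N * qpoch (q / x) q N * x ^ N = qpoch x q N * (qpoch (q / x) q N * x ^ N)"
    by (simp only: mult.assoc)
  also have "\<dots> = c * ((\<Prod>k<N. 1 - x / q ^ Suc k) * qpoch x q N)"
    unfolding qpoch_reciprocal_mult_power[OF assms] c_def by (simp only: mult_ac)
  also have "\<dots> = c * qpoch (x / q ^ N) q (N + N)"
    by (simp only: qpoch_div_power_double[OF assms(1)])
  finally have "qpoch x q N * qpoch (q / x) q N = c * qpoch (x / q ^ N) q (N + N) / x ^ N"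
    using assms by (simp add: nonzero_eq_divide_eq)
  also have "\<dots> = (\<Sum>k\<le>N + N. qbinom q (N + N) k
      * (c * ((-1) ^ k * q ^ (k choose 2) * (x / q ^ N) ^ k) / x ^ N))"
    unfolding qbinomial_theorem sum_distrib_left sum_divide_distrib
    by (rule sum.cong) (simp_all add: mult_ac)
  finally show ?thesis
    using assms by (simp add: c_def jacobi_term_of_nat_diff)
qed

lemma tannery_truncated_sums:
  fixes t :: "nat \<Rightarrow> 'a::{real_normed_algebra,banach}"
  assumes h: "filterlim h at_top sequentially"
    and t: "summable (\<lambda>i. norm (t i))"
    and g: "\<And>i. (\<lambda>N. g N i) \<longlonglongrightarrow> L"
    and bound: "\<And>N i. norm (g N i) \<le> B"
  shows "(\<lambda>N. \<Sum>i<h N. g N i * t i) \<longlonglongrightarrow> L * (\<Sum>i. t i)"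
proof -
  define a where "a i N = (if i < h N then g N i * t i else 0)" for i N
  have "0 \<le> B"
    using order_trans[OF norm_ge_zero bound] .
  have "eventually (\<lambda>N. summable (\<lambda>i. norm (a i N))) sequentially \<and>
        summable (\<lambda>i. norm (L * t i)) \<and>
        (\<lambda>N. \<Sum>i. a i N) \<longlonglongrightarrow> (\<Sum>i. L * t i)"
  proof (rule tannerys_theorem[where M = "\<lambda>i. B * norm (t i)"])
    fix i
    have "eventually (\<lambda>N. Suc i \<le> h N) sequentially"
      using h by (simp add: filterlim_at_top)
    then have "eventually (\<lambda>N. g N i * t i = a i N) sequentially"
      by eventually_elim (simp add: a_def Suc_le_eq)
    with tendsto_mult[OF g tendsto_const] show "(\<lambda>N. a i N) \<longlonglongrightarrow> L * t i"
      by (rule Lim_transform_eventually)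
  next
    have "norm (a i N) \<le> B * norm (t i)" for i N
      using \<open>0 \<le> B\<close> order_trans[OF norm_mult_ineq mult_right_mono[OF bound norm_ge_zero]]
      by (simp add: a_def)
    then show "eventually (\<lambda>(i, N). norm (a i N) \<le> B * norm (t i)) (at_top \<times>\<^sub>F sequentially)"
      by (intro always_eventually) auto
  qed (use t in auto)
  moreover have "(\<Sum>i. a i N) = (\<Sum>i<h N. g N i * t i)" for N
    by (subst suminf_finite[of "{..<h N}"]) (auto simp: a_def)
  moreover have "(\<Sum>i. L * t i) = L * (\<Sum>i. t i)"
    by (rule suminf_mult[OF summable_norm_cancel[OF t]])
  ultimately show ?thesis
    by simp
qed

lemma summable_power_choose_two:
  fixes r \<rho> :: real
  assumes "0 \<le> r" "r < 1" "0 \<le> \<rho>"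
  shows "summable (\<lambda>n. r ^ (n choose 2) * \<rho> ^ n)"
proof -
  have "(\<lambda>n. r ^ n * \<rho>) \<longlonglongrightarrow> 0 * \<rho>"
    using assms by (intro tendsto_mult LIMSEQ_power_zero tendsto_const) auto
  then have "eventually (\<lambda>n. r ^ n * \<rho> < 1 / 2) sequentially"
    by (intro order_tendstoD) auto
  then obtain N where N: "\<And>n. n \<ge> N \<Longrightarrow> r ^ n * \<rho> < 1 / 2"
    unfolding eventually_sequentially by auto
  show ?thesis
  proof (rule summable_ratio_test[of "1 / 2" N])
    fix n
    assume "n \<ge> N"
    have "norm (r ^ (Suc n choose 2) * \<rho> ^ Suc n) = (r ^ n * \<rho>) * (r ^ (n choose 2) * \<rho> ^ n)"
      using assms by (simp add: choose_two_Suc power_add abs_mult algebra_simps)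
    also have "\<dots> \<le> 1 / 2 * (r ^ (n choose 2) * \<rho> ^ n)"
      using N[OF \<open>n \<ge> N\<close>] assms by (intro mult_right_mono) auto
    also have "\<dots> = 1 / 2 * norm (r ^ (n choose 2) * \<rho> ^ n)"
      using assms by simp
    finally show "norm (r ^ (Suc n choose 2) * \<rho> ^ Suc n) \<le> 1 / 2 * norm (r ^ (n choose 2) * \<rho> ^ n)" .
  qed simp
qed

lemma summable_norm_jacobi_term_nat:
  assumes "norm q < 1"
  shows "summable (\<lambda>n. norm (jacobi_term q z (int n)))"
  using summable_power_choose_two[of "norm q" "norm z"] assms
  by (simp add: jacobi_term_of_nat norm_mult norm_power)

lemma summable_norm_jacobi_term_neg:
  assumes "norm q < 1" "q \<noteq> 0" "z \<noteq> 0"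
  shows "summable (\<lambda>n. norm (jacobi_term q z (- int n - 1)))"
proof -
  have "- int n - 1 = - int (Suc n)" for n
    by simp
  then have "jacobi_term q z (- int n - 1) = jacobi_term q (q / z) (int (Suc n))" for n
    by (simp only: jacobi_term_uminus[OF assms(2,3)])
  moreover have "summable (\<lambda>n. norm (jacobi_term q (q / z) (int (Suc n))))"
    by (rule summable_Suc_iff[where f = "\<lambda>n. norm (jacobi_term q (q / z) (int n))", THEN iffD2])
      (rule summable_norm_jacobi_term_nat[OF assms(1)])
  ultimately show ?thesis
    by simp
qed

lemma sum_atMost_double_split:
  "(\<Sum>k\<le>N + N. f k) = (\<Sum>i<Suc N. f (N + i)) + (\<Sum>i<N. f (N - Suc i))"
proof -
  have "(\<Sum>k\<le>N + N. f k) = (\<Sum>k\<in>{..<N} \<union> {N..N + N}. f k)"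
    by (rule sum.cong) auto
  also have "\<dots> = (\<Sum>k<N. f k) + (\<Sum>k\<in>{N..N + N}. f k)"
    by (rule sum.union_disjoint) auto
  also have "(\<Sum>k<N. f k) = (\<Sum>i<N. f (N - Suc i))"
    by (rule sum.nat_diff_reindex[symmetric])
  also have "(\<Sum>k\<in>{N..N + N}. f k) = (\<Sum>i<Suc N. f (N + i))"
    using sum.shift_bounds_cl_nat_ivl[of f 0 N N] by (simp add: atLeast0AtMost lessThan_Suc_atMost add.commute)
  finally show ?thesis
    by (simp add: ac_simps)
qed

lemma finite_triple_product_halves:
  assumes "q \<noteq> 0" "x \<noteq> 0"
  shows "qpoch x q N * qpoch (q / x) q N
      = (\<Sum>i<Suc N. qbinom q (N + N) (N + i) * jacobi_term q x (int i))
        + (\<Sum>i<N. qbinom q (N + N) (N - Suc i) * jacobi_term q x (- int i - 1))"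
proof -
  have "(\<Sum>i<N. qbinom q (N + N) (N - Suc i) * jacobi_term q x (int (N - Suc i) - int N))
      = (\<Sum>i<N. qbinom q (N + N) (N - Suc i) * jacobi_term q x (- int i - 1))"
  proof (rule sum.cong)
    fix i
    assume "i \<in> {..<N}"
    then have "int (N - Suc i) - int N = - int i - 1"
      by (simp add: of_nat_diff)
    then show "qbinom q (N + N) (N - Suc i) * jacobi_term q x (int (N - Suc i) - int N)
        = qbinom q (N + N) (N - Suc i) * jacobi_term q x (- int i - 1)"
      by (simp only:)
  qed simp
  then show ?thesis
    by (simp add: finite_triple_product[OF assms] sum_atMost_double_split)
qed

lemma
  assumes "norm q < 1"
  shows qbinom_double_plus_tendsto: "(\<lambda>N. qbinom q (N + N) (N + i)) \<longlonglongrightarrow> 1 / qpoch_inf q q"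
    and qbinom_double_minus_tendsto: "(\<lambda>N. qbinom q (N + N) (N - i)) \<longlonglongrightarrow> 1 / qpoch_inf q q"
proof -
  have "eventually (\<lambda>N. qbinom q ((N + i) + (N - i)) (N + i) = qbinom q (N + N) (N + i)) sequentially"
    using eventually_ge_at_top[of i] by eventually_elim simp
  with qbinom_tendsto[OF assms filterlim_add_const_nat_at_top filterlim_minus_const_nat_at_top]
  show "(\<lambda>N. qbinom q (N + N) (N + i)) \<longlonglongrightarrow> 1 / qpoch_inf q q"
    by (rule Lim_transform_eventually)
  have "eventually (\<lambda>N. qbinom q ((N - i) + (N + i)) (N - i) = qbinom q (N + N) (N - i)) sequentially"
    using eventually_ge_at_top[of i] by eventually_elim simp
  with qbinom_tendsto[OF assms filterlim_minus_const_nat_at_top filterlim_add_const_nat_at_top]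
  show "(\<lambda>N. qbinom q (N + N) (N - i)) \<longlonglongrightarrow> 1 / qpoch_inf q q"
    by (rule Lim_transform_eventually)
qed

lemma
  fixes h :: "int \<Rightarrow> 'a::{banach,second_countable_topology}"
  assumes nonneg: "summable (\<lambda>n. norm (h (int n)))"
    and neg: "summable (\<lambda>n. norm (h (- int n - 1)))"
  shows abs_summable_on_int_halves: "Infinite_Set_Sum.abs_summable_on h UNIV"
    and infsetsum_int_halves: "infsetsum h UNIV = (\<Sum>n. h (int n)) + (\<Sum>n. h (- int n - 1))"
proof -
  define neg_int :: "nat \<Rightarrow> int" where "neg_int n = - int n - 1" for n
  have UNIV_eq: "UNIV = range int \<union> range neg_int"
  proof -
    have "m \<in> range int \<union> range neg_int" for m
    proof (cases "m \<ge> 0")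
      case True
      then show ?thesis by (auto intro: image_eqI[of _ _ "nat m"])
    next
      case False
      then have "m = neg_int (nat (- m - 1))" by (simp add: neg_int_def)
      then show ?thesis by blast
    qed
    then show ?thesis by auto
  qed
  have "inj int" "inj neg_int"
    by (auto simp: inj_on_def neg_int_def)
  have "Infinite_Set_Sum.abs_summable_on (\<lambda>n. h (int n)) UNIV"
    "Infinite_Set_Sum.abs_summable_on (\<lambda>n. h (neg_int n)) UNIV"
    using nonneg neg by (simp_all add: abs_summable_on_nat_iff' neg_int_def)
  then have sum_nonneg: "Infinite_Set_Sum.abs_summable_on h (range int)"
    and sum_neg: "Infinite_Set_Sum.abs_summable_on h (range neg_int)"
    using abs_summable_on_reindex_iff[OF \<open>inj int\<close>] abs_summable_on_reindex_iff[OF \<open>inj neg_int\<close>]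
    by blast+
  then show "Infinite_Set_Sum.abs_summable_on h UNIV"
    by (subst UNIV_eq) (rule abs_summable_on_union)
  have "infsetsum h UNIV = infsetsum h (range int) + infsetsum h (range neg_int)"
    by (subst UNIV_eq) (rule infsetsum_Un_disjoint[OF sum_nonneg sum_neg], auto simp: neg_int_def)
  also have "infsetsum h (range int) = (\<Sum>n. h (int n))"
    using infsetsum_reindex[OF \<open>inj int\<close>, of h] infsetsum_nat'[of "\<lambda>n. h (int n)"] nonneg
    by (simp add: abs_summable_on_nat_iff')
  also have "infsetsum h (range neg_int) = (\<Sum>n. h (- int n - 1))"
    using infsetsum_reindex[OF \<open>inj neg_int\<close>, of h] infsetsum_nat'[of "\<lambda>n. h (neg_int n)"] neg
    by (simp add: abs_summable_on_nat_iff' neg_int_def)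
  finally show "infsetsum h UNIV = (\<Sum>n. h (int n)) + (\<Sum>n. h (- int n - 1))" .
qed

lemma abs_summable_jacobi_term:
  assumes "norm q < 1" "q \<noteq> 0" "z \<noteq> 0"
  shows "Infinite_Set_Sum.abs_summable_on (jacobi_term q z) UNIV"
  by (rule abs_summable_on_int_halves[OF summable_norm_jacobi_term_nat summable_norm_jacobi_term_neg])
    (use assms in auto)

definition jacobi_sum :: "complex \<Rightarrow> complex \<Rightarrow> complex" where
  "jacobi_sum q z = infsetsum (jacobi_term q z) UNIV"

text \<open>Tannery's theorem lets \<open>N \<rightarrow> \<infinity>\<close> termwise in the two halves of the finite triple
  product, each central Gaussian binomial tending to \<open>1/(q;q)\<^sub>\<infinity>\<close>.\<close>

theorem jacobi_triple_product:
  assumes q: "norm q < 1" "q \<noteq> 0" and x: "x \<noteq> 0"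
  shows "qpoch_inf q q * theta x q = jacobi_sum q x"
proof -
  define P where "P = qpoch_inf q q"
  obtain B where B: "\<And>n k. norm (qbinom q n k) \<le> B"
    using qbinom_bounded[OF q(1)] by blast
  have nonneg: "(\<lambda>N. \<Sum>i<Suc N. qbinom q (N + N) (N + i) * jacobi_term q x (int i))
      \<longlonglongrightarrow> 1 / P * (\<Sum>i. jacobi_term q x (int i))"
    unfolding P_def
    by (rule tannery_truncated_sums[OF filterlim_Suc summable_norm_jacobi_term_nat[OF q(1)]
          qbinom_double_plus_tendsto[OF q(1)] B])
  have neg: "(\<lambda>N. \<Sum>i<N. qbinom q (N + N) (N - Suc i) * jacobi_term q x (- int i - 1))
      \<longlonglongrightarrow> 1 / P * (\<Sum>i. jacobi_term q x (- int i - 1))"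
    unfolding P_def
    by (rule tannery_truncated_sums[OF filterlim_ident summable_norm_jacobi_term_neg[OF q x]
          qbinom_double_minus_tendsto[OF q(1)] B])
  have "(\<lambda>N. qpoch x q N * qpoch (q / x) q N)
      \<longlonglongrightarrow> 1 / P * (\<Sum>i. jacobi_term q x (int i)) + 1 / P * (\<Sum>i. jacobi_term q x (- int i - 1))"
    using tendsto_add[OF nonneg neg] by (simp add: finite_triple_product_halves[OF q(2) x])
  with theta_LIMSEQ[OF q(1)]
  have "theta x q = 1 / P * (\<Sum>i. jacobi_term q x (int i)) + 1 / P * (\<Sum>i. jacobi_term q x (- int i - 1))"
    by (rule LIMSEQ_unique)
  also have "\<dots> = jacobi_sum q x / P"
    unfolding jacobi_sum_def infsetsum_int_halves[OF summable_norm_jacobi_term_nat[OF q(1)] summable_norm_jacobi_term_neg[OF q x]]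
    by (simp add: add_divide_distrib)
  finally have "theta x q = jacobi_sum q x / P" .
  then show ?thesis
    using qpoch_inf_q_nonzero[OF q(1)] by (simp add: P_def field_simps)
qed

section \<open>Weierstrass' addition formula\<close>

definition theta_series_term :: "complex \<Rightarrow> int \<Rightarrow> complex \<Rightarrow> int \<Rightarrow> complex" where
  "theta_series_term q c w j = q powi (j * j + c * j) * w powi j"

definition theta_series :: "complex \<Rightarrow> int \<Rightarrow> complex \<Rightarrow> complex" where
  "theta_series q c w = infsetsum (theta_series_term q c w) UNIV"

lemma theta_series_term_eq_jacobi_term:
  assumes "q \<noteq> 0"
  shows "theta_series_term q c w j = jacobi_term (q\<^sup>2) (- (q powi (c + 1)) * w) j"
proof -
  have "2 * (j * (j - 1) div 2) + (c + 1) * j = j * j + c * j"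
    by (simp only: double_mult_pred_div_2) (simp add: algebra_simps)
  then have q_part: "(q\<^sup>2) powi (j * (j - 1) div 2) * (q powi (c + 1)) powi j = q powi (j * j + c * j)"
    using assms by (simp add: power_int_power power_int_mult[symmetric] mult.commute flip: power_int_add)
  have sign_part: "(-1::complex) powi j * (-1) powi j = 1"
    by (simp flip: power_int_mult_distrib)
  have "- (q powi (c + 1)) * w = (-1) * (q powi (c + 1) * w)"
    by simp
  then have "(- (q powi (c + 1)) * w) powi j = (-1) powi j * ((q powi (c + 1)) powi j * w powi j)"
    by (simp only: power_int_mult_distrib)
  then have "jacobi_term (q\<^sup>2) (- (q powi (c + 1)) * w) j
      = ((-1) powi j * (-1) powi j) * ((q\<^sup>2) powi (j * (j - 1) div 2) * (q powi (c + 1)) powi j) * w powi j"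
    by (simp add: jacobi_term_def mult_ac)
  then show ?thesis
    by (simp only: q_part sign_part theta_series_term_def mult_1_left)
qed

lemma abs_summable_theta_series_term:
  assumes "norm q < 1" "q \<noteq> 0" "w \<noteq> 0"
  shows "Infinite_Set_Sum.abs_summable_on (theta_series_term q c w) UNIV"
proof -
  have "norm (q\<^sup>2) < 1"
    using assms by (simp add: norm_power power_less_one_iff)
  then have "Infinite_Set_Sum.abs_summable_on (jacobi_term (q\<^sup>2) (- (q powi (c + 1)) * w)) UNIV"
    using assms by (intro abs_summable_jacobi_term) auto
  then show ?thesis
    by (simp add: theta_series_term_eq_jacobi_term[OF assms(2)])
qed

lemma power_int_mult_power_int_eq:
  fixes x :: "'a::division_ring"
  assumes "x \<noteq> 0" "m + n = m' + n'"
  shows "x powi m * x powi n = x powi m' * x powi n'"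
  using assms by (metis power_int_add)

lemma jacobi_term_mult_even:
  assumes "q \<noteq> 0" "a \<noteq> 0" "b \<noteq> 0"
  shows "jacobi_term q a (i + j) * jacobi_term q b (i - j)
      = theta_series_term q (-1) (a * b) i * theta_series_term q 0 (a / b) j"
proof -
  have "(-1::complex) powi (i + j) * (-1) powi (i - j) = ((-1) powi 2) powi i"
    by (simp add: power_int_mult[symmetric] power_int_add[symmetric] mult.commute)
  then have sign_part: "(-1::complex) powi (i + j) * (-1) powi (i - j) = 1"
    by simp
  have "2 * ((i + j) * (i + j - 1) div 2 + (i - j) * (i - j - 1) div 2)
      = 2 * ((i * i + (-1) * i) + (j * j + 0 * j))"
    by (simp only: distrib_left double_mult_pred_div_2) (simp add: algebra_simps)
  then have "q powi ((i + j) * (i + j - 1) div 2) * q powi ((i - j) * (i - j - 1) div 2)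
      = q powi (i * i + (-1) * i) * q powi (j * j + 0 * j)"
    by (intro power_int_mult_power_int_eq assms(1)) simp
  moreover have "a powi (i + j) * b powi (i - j) = (a * b) powi i * (a / b) powi j"
    using assms by (simp add: power_int_add power_int_diff power_int_mult_distrib power_int_divide_distrib)
  moreover have "jacobi_term q a (i + j) * jacobi_term q b (i - j)
      = ((-1) powi (i + j) * (-1) powi (i - j))
        * (q powi ((i + j) * (i + j - 1) div 2) * q powi ((i - j) * (i - j - 1) div 2))
        * (a powi (i + j) * b powi (i - j))"
    by (simp add: jacobi_term_def mult_ac)
  ultimately show ?thesis
    unfolding sign_part by (simp add: theta_series_term_def mult_ac)
qed

lemma jacobi_term_mult_odd:
  assumes "q \<noteq> 0" "a \<noteq> 0" "b \<noteq> 0"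
  shows "jacobi_term q a (i + j + 1) * jacobi_term q b (i - j)
      = - a * (theta_series_term q 0 (a * b) i * theta_series_term q 1 (a / b) j)"
proof -
  have "(-1::complex) powi (i + j + 1) * (-1) powi (i - j) = ((-1) powi 2) powi i * (-1)"
    by (simp add: power_int_mult[symmetric] power_int_add[symmetric] mult.commute)
  then have sign_part: "(-1::complex) powi (i + j + 1) * (-1) powi (i - j) = -1"
    by simp
  have "2 * ((i + j + 1) * (i + j + 1 - 1) div 2 + (i - j) * (i - j - 1) div 2)
      = 2 * ((i * i + 0 * i) + (j * j + 1 * j))"
    by (simp only: distrib_left double_mult_pred_div_2) (simp add: algebra_simps)
  then have "q powi ((i + j + 1) * (i + j + 1 - 1) div 2) * q powi ((i - j) * (i - j - 1) div 2)
      = q powi (i * i + 0 * i) * q powi (j * j + 1 * j)"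
    by (intro power_int_mult_power_int_eq assms(1)) simp
  moreover have "a powi (i + j + 1) * b powi (i - j) = a * ((a * b) powi i * (a / b) powi j)"
    using assms by (simp add: power_int_add power_int_diff power_int_mult_distrib power_int_divide_distrib)
  moreover have "jacobi_term q a (i + j + 1) * jacobi_term q b (i - j)
      = ((-1) powi (i + j + 1) * (-1) powi (i - j))
        * (q powi ((i + j + 1) * (i + j + 1 - 1) div 2) * q powi ((i - j) * (i - j - 1) div 2))
        * (a powi (i + j + 1) * b powi (i - j))"
    by (simp add: jacobi_term_def mult_ac)
  ultimately show ?thesis
    unfolding sign_part by (simp add: theta_series_term_def mult_ac)
qed

lemma infsetsum_split_reindex:
  fixes F :: "'a \<Rightarrow> 'b::{banach,second_countable_topology}"
  assumes "Infinite_Set_Sum.abs_summable_on F UNIV" "inj \<phi>" "inj \<psi>"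
    and "range \<phi> \<union> range \<psi> = UNIV" "range \<phi> \<inter> range \<psi> = {}"
  shows "infsetsum F UNIV = infsetsum (F \<circ> \<phi>) UNIV + infsetsum (F \<circ> \<psi>) UNIV"
proof -
  have "infsetsum F UNIV = infsetsum F (range \<phi>) + infsetsum F (range \<psi>)"
    using assms by (metis abs_summable_on_subset infsetsum_Un_disjoint top_greatest)
  also have "\<dots> = infsetsum (F \<circ> \<phi>) UNIV + infsetsum (F \<circ> \<psi>) UNIV"
    using assms(2,3) by (simp add: infsetsum_reindex)
  finally show ?thesis .
qed

lemma int_pairs_parity_partition:
  fixes even_pair odd_pair :: "int \<times> int \<Rightarrow> int \<times> int"
  defines "even_pair \<equiv> \<lambda>(i, j). (i + j, i - j)" and "odd_pair \<equiv> \<lambda>(i, j). (i + j + 1, i - j)"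
  shows "inj even_pair" "inj odd_pair"
    and "range even_pair \<union> range odd_pair = UNIV" "range even_pair \<inter> range odd_pair = {}"
proof -
  show "inj even_pair" "inj odd_pair"
    by (auto simp: inj_on_def even_pair_def odd_pair_def)
  have "(n, m) \<in> range even_pair \<union> range odd_pair" for n m
  proof (cases "even (n - m)")
    case True
    then obtain j where "n - m = 2 * j" by (rule evenE)
    then have "(n, m) = even_pair (m + j, j)" by (simp add: even_pair_def)
    then show ?thesis by blast
  next
    case False
    then obtain j where "n - m = 2 * j + 1" by (rule oddE)
    then have "(n, m) = odd_pair (m + j, j)" by (simp add: odd_pair_def)
    then show ?thesis by blast
  qed
  then show "range even_pair \<union> range odd_pair = UNIV"
    by auto
  have "even_pair x \<noteq> odd_pair y" for x y
    by (cases x; cases y) (auto simp: even_pair_def odd_pair_def, presburger)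
  then show "range even_pair \<inter> range odd_pair = {}"
    by blast
qed

lemma theta_series_shift:
  assumes "norm q < 1" "q \<noteq> 0" "w \<noteq> 0"
  shows "theta_series q (-1) w = w * theta_series q 1 w"
proof -
  have "bij_betw (\<lambda>k::int. k + 1) UNIV UNIV"
    by (rule bij_betwI[of _ _ _ "\<lambda>k. k - 1"]) auto
  then have "theta_series q (-1) w = infsetsum (\<lambda>k. theta_series_term q (-1) w (k + 1)) UNIV"
    unfolding theta_series_def by (rule infsetsum_reindex_bij_betw[symmetric])
  also have "(\<lambda>k. theta_series_term q (-1) w (k + 1)) = (\<lambda>k. w * theta_series_term q 1 w k)"
  proof
    fix k :: int
    have "(k + 1) * (k + 1) + (-1) * (k + 1) = k * k + 1 * k"
      by (simp add: algebra_simps)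
    then have "theta_series_term q (-1) w (k + 1) = q powi (k * k + 1 * k) * w powi (k + 1)"
      by (simp only: theta_series_term_def)
    then show "theta_series_term q (-1) w (k + 1) = w * theta_series_term q 1 w k"
      using assms(3) by (simp add: theta_series_term_def power_int_add_1' mult_ac)
  qed
  also have "infsetsum (\<lambda>k. w * theta_series_term q 1 w k) UNIV = w * theta_series q 1 w"
    unfolding theta_series_def by (rule infsetsum_cmult_right) (rule abs_summable_theta_series_term[OF assms])
  finally show ?thesis .
qed

lemma infsetsum_theta_series_product:
  assumes "norm q < 1" "q \<noteq> 0" "u \<noteq> 0" "v \<noteq> 0"
  shows "infsetsum (\<lambda>(i, j). theta_series_term q c u i * theta_series_term q d v j) UNIV
      = theta_series q c u * theta_series q d v"
  using infsetsum_product[OF countableI_type countableI_type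
      abs_summable_theta_series_term abs_summable_theta_series_term] assms
  by (simp add: theta_series_def)

text \<open>Writing \<open>(n, m)\<close> as \<open>(i + j, i - j)\<close> or \<open>(i + j + 1, i - j)\<close> according to the
  parity of \<open>n - m\<close> factors the double series into theta series at \<open>ab\<close> and \<open>a/b\<close>.\<close>

theorem jacobi_sum_mult:
  assumes q: "norm q < 1" "q \<noteq> 0" and ab: "a \<noteq> 0" "b \<noteq> 0"
  shows "jacobi_sum q a * jacobi_sum q b
      = a * b * theta_series q 1 (a * b) * theta_series q 0 (a / b)
        - a * theta_series q 0 (a * b) * theta_series q 1 (a / b)"
proof -
  define F where "F = (\<lambda>(n, m). jacobi_term q a n * jacobi_term q b m)"
  define even_pair :: "int \<times> int \<Rightarrow> int \<times> int" where "even_pair = (\<lambda>(i, j). (i + j, i - j))"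
  define odd_pair :: "int \<times> int \<Rightarrow> int \<times> int" where "odd_pair = (\<lambda>(i, j). (i + j + 1, i - j))"
  have ab': "a * b \<noteq> 0" "a / b \<noteq> 0"
    using ab by auto
  have "Infinite_Set_Sum.abs_summable_on F UNIV" "jacobi_sum q a * jacobi_sum q b = infsetsum F UNIV"
    using abs_summable_on_product[OF countableI_type countableI_type abs_summable_jacobi_term abs_summable_jacobi_term]
      infsetsum_product[OF countableI_type countableI_type abs_summable_jacobi_term abs_summable_jacobi_term] q ab
    by (simp_all add: F_def jacobi_sum_def)
  then have "jacobi_sum q a * jacobi_sum q b = infsetsum (F \<circ> even_pair) UNIV + infsetsum (F \<circ> odd_pair) UNIV"
    using int_pairs_parity_partition by (simp add: infsetsum_split_reindex even_pair_def odd_pair_def)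
  also have "F \<circ> even_pair = (\<lambda>(i, j). theta_series_term q (-1) (a * b) i * theta_series_term q 0 (a / b) j)"
    using jacobi_term_mult_even[OF q(2) ab] by (auto simp: F_def even_pair_def)
  also have "infsetsum \<dots> UNIV = theta_series q (-1) (a * b) * theta_series q 0 (a / b)"
    by (rule infsetsum_theta_series_product[OF q ab'])
  also have "F \<circ> odd_pair = (\<lambda>(i, j). - a * (theta_series_term q 0 (a * b) i * theta_series_term q 1 (a / b) j))"
    using jacobi_term_mult_odd[OF q(2) ab] by (auto simp: F_def odd_pair_def)
  also have "infsetsum \<dots> UNIV = - a * (theta_series q 0 (a * b) * theta_series q 1 (a / b))"
    using infsetsum_cmult_right[of "- a" "\<lambda>(i, j). theta_series_term q 0 (a * b) i * theta_series_term q 1 (a / b) j"]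
      abs_summable_on_product[OF countableI_type countableI_type
        abs_summable_theta_series_term abs_summable_theta_series_term] q ab'
    by (simp add: case_prod_unfold infsetsum_theta_series_product[OF q ab', unfolded case_prod_unfold])
  finally show ?thesis
    using theta_series_shift[OF q ab'(1)] by (simp add: mult_ac)
qed

text \<open>Each of the six products is expanded by the product formula; what remains is a
  polynomial identity in eight theta series values.\<close>

theorem jacobi_sum_addition:
  assumes q: "norm q < 1" "q \<noteq> 0" and nz: "a \<noteq> 0" "b \<noteq> 0" "c \<noteq> 0" "d \<noteq> 0"
  shows "jacobi_sum q a * jacobi_sum q b * jacobi_sum q c * jacobi_sum q (a * d\<^sup>2 / (b * c))
       - jacobi_sum q d * jacobi_sum q (a * d / b) * jacobi_sum q (a * d / c) * jacobi_sum q (b * c / d)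
       = d * (jacobi_sum q (a * d) * jacobi_sum q (b / d) * jacobi_sum q (c / d) * jacobi_sum q (a * d / (b * c)))"
proof -
  define w1 w2 w3 r where "w1 = a\<^sup>2 * d\<^sup>2 / (b * c)" and "w2 = b * c" and "w3 = b * c / d\<^sup>2" and "r = b / c"
  let ?e = "theta_series q 0" and ?f = "theta_series q 1"
  have mult: "jacobi_sum q x * jacobi_sum q y = u * ?f u * ?e v - x * ?e u * ?f v"
    if "x \<noteq> 0" "y \<noteq> 0" "x * y = u" "x / y = v" for x y u v
    using jacobi_sum_mult[OF q that(1,2)] that(3,4) by simp
  have p1: "jacobi_sum q a * jacobi_sum q (a * d\<^sup>2 / (b * c)) = w1 * ?f w1 * ?e w3 - a * ?e w1 * ?f w3"
    using nz by (intro mult) (auto simp: w1_def w3_def field_simps power2_eq_square)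
  have p2: "jacobi_sum q b * jacobi_sum q c = w2 * ?f w2 * ?e r - b * ?e w2 * ?f r"
    using nz by (intro mult) (auto simp: w2_def r_def)
  have p3: "jacobi_sum q (b * c / d) * jacobi_sum q d = w2 * ?f w2 * ?e w3 - b * c / d * ?e w2 * ?f w3"
    using nz by (intro mult) (auto simp: w2_def w3_def field_simps power2_eq_square)
  have p4: "jacobi_sum q (a * d / c) * jacobi_sum q (a * d / b) = w1 * ?f w1 * ?e r - a * d / c * ?e w1 * ?f r"
    using nz by (intro mult) (auto simp: w1_def r_def field_simps power2_eq_square)
  have p5: "jacobi_sum q (a * d) * jacobi_sum q (a * d / (b * c)) = w1 * ?f w1 * ?e w2 - a * d * ?e w1 * ?f w2"
    using nz by (intro mult) (auto simp: w1_def w2_def field_simps power2_eq_square)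
  have p6: "jacobi_sum q (b / d) * jacobi_sum q (c / d) = w3 * ?f w3 * ?e r - b / d * ?e w3 * ?f r"
    using nz by (intro mult) (auto simp: w3_def r_def field_simps power2_eq_square)
  have identity: "(w1 * f1 * e3 - a * e1 * f3) * (w2 * f2 * er - b * e2 * fr)
      - (w2 * f2 * e3 - b * c / d * e2 * f3) * (w1 * f1 * er - a * d / c * e1 * fr)
      = d * ((w1 * f1 * e2 - a * d * e1 * f2) * (w3 * f3 * er - b / d * e3 * fr))"
    for e1 e2 e3 er f1 f2 f3 fr :: complex
    using nz unfolding w1_def w2_def w3_def by (simp add: field_simps power2_eq_square)
  have "jacobi_sum q a * jacobi_sum q b * jacobi_sum q c * jacobi_sum q (a * d\<^sup>2 / (b * c))
       - jacobi_sum q d * jacobi_sum q (a * d / b) * jacobi_sum q (a * d / c) * jacobi_sum q (b * c / d)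
      = (jacobi_sum q a * jacobi_sum q (a * d\<^sup>2 / (b * c))) * (jacobi_sum q b * jacobi_sum q c)
       - (jacobi_sum q (b * c / d) * jacobi_sum q d) * (jacobi_sum q (a * d / c) * jacobi_sum q (a * d / b))"
    by (simp add: mult_ac)
  also have "\<dots> = d * ((jacobi_sum q (a * d) * jacobi_sum q (a * d / (b * c)))
      * (jacobi_sum q (b / d) * jacobi_sum q (c / d)))"
    unfolding p1 p2 p3 p4 p5 p6 by (rule identity)
  finally show ?thesis
    by (simp add: mult_ac)
qed

lemma theta_eq_jacobi_sum:
  assumes "norm q < 1" "q \<noteq> 0" "z \<noteq> 0"
  shows "theta z q = jacobi_sum q z / qpoch_inf q q"
  using jacobi_triple_product[OF assms] qpoch_inf_q_nonzero[OF assms(1)]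
  by (simp add: field_simps)

theorem theta_addition:
  assumes p: "norm p < 1" and nz: "a \<noteq> 0" "b \<noteq> 0" "c \<noteq> 0" "d \<noteq> 0"
  shows "theta a p * theta b p * theta c p * theta (a * d\<^sup>2 / (b * c)) p
       - theta d p * theta (a * d / b) p * theta (a * d / c) p * theta (b * c / d) p
       = d * (theta (a * d) p * theta (b / d) p * theta (c / d) p * theta (a * d / (b * c)) p)"
proof (cases "p = 0")
  case True
  \<comment> \<open>The triple product needs a nonzero nome; at \<open>p = 0\<close> the identity is polynomial.\<close>
  then show ?thesis
    using nz by (simp add: theta_zero_nome field_simps) (simp add: algebra_simps power2_eq_square)
next
  case False
  define P where "P = qpoch_inf p p"
  have theta_eq: "theta z p = jacobi_sum p z / P" if "z \<noteq> 0" for z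
    using theta_eq_jacobi_sum[OF p False that] by (simp add: P_def)
  have "theta a p * theta b p * theta c p * theta (a * d\<^sup>2 / (b * c)) p
       - theta d p * theta (a * d / b) p * theta (a * d / c) p * theta (b * c / d) p
      = (jacobi_sum p a * jacobi_sum p b * jacobi_sum p c * jacobi_sum p (a * d\<^sup>2 / (b * c))
       - jacobi_sum p d * jacobi_sum p (a * d / b) * jacobi_sum p (a * d / c) * jacobi_sum p (b * c / d)) / P ^ 4"
    using nz by (simp add: theta_eq diff_divide_distrib power4_eq_xxxx)
  also have "\<dots> = d * (jacobi_sum p (a * d) * jacobi_sum p (b / d) * jacobi_sum p (c / d)
      * jacobi_sum p (a * d / (b * c))) / P ^ 4"
    by (simp only: jacobi_sum_addition[OF p False nz])
  also have "\<dots> = d * (theta (a * d) p * theta (b / d) p * theta (c / d) p * theta (a * d / (b * c)) p)"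
    using nz by (simp add: theta_eq power4_eq_xxxx)
  finally show ?thesis .
qed

section \<open>The telescoping sum\<close>

lemma telescoping_quotient_sum:
  fixes x y w :: "nat \<Rightarrow> 'a::field"
  assumes "\<And>k. k \<le> n \<Longrightarrow> x k - y k = w k"
    and "(\<Prod>j<n. y (Suc j)) \<noteq> 0"
  shows "(\<Sum>k\<le>n. w k * (\<Prod>j<k. x j) / (\<Prod>j<k. y (Suc j)))
      = (\<Prod>j\<le>n. x j) / (\<Prod>j<n. y (Suc j)) - y 0"
  using assms
proof (induction n)
  case 0
  then show ?case by simp
next
  case (Suc n)
  define X where "X = (\<Prod>j\<le>n. x j)"
  define Y where "Y = (\<Prod>j<n. y (Suc j))"
  have "Y \<noteq> 0" "y (Suc n) \<noteq> 0"
    using Suc.prems(2) by (simp_all add: Y_def)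
  have IH: "(\<Sum>k\<le>n. w k * (\<Prod>j<k. x j) / (\<Prod>j<k. y (Suc j))) = X / Y - y 0"
    unfolding X_def Y_def by (rule Suc.IH) (use Suc.prems \<open>Y \<noteq> 0\<close> Y_def in auto)
  have "(\<Prod>j<Suc n. x j) = X"
    by (simp add: X_def lessThan_Suc_atMost)
  moreover have "(\<Prod>j<Suc n. y (Suc j)) = Y * y (Suc n)"
    by (simp add: Y_def)
  ultimately have "(\<Sum>k\<le>Suc n. w k * (\<Prod>j<k. x j) / (\<Prod>j<k. y (Suc j)))
      = X / Y - y 0 + (x (Suc n) - y (Suc n)) * X / (Y * y (Suc n))"
    using IH Suc.prems(1)[of "Suc n"] by simp
  also have "\<dots> = X * x (Suc n) / (Y * y (Suc n)) - y 0"
    using \<open>Y \<noteq> 0\<close> \<open>y (Suc n) \<noteq> 0\<close> by (simp add: field_simps)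
  also have "X * x (Suc n) = (\<Prod>j\<le>Suc n. x j)"
    by (simp add: X_def)
  finally show ?case
    by (simp add: Y_def)
qed

lemma etheta_poch_Suc_shift: "etheta_poch u v p (Suc n) = theta u p * etheta_poch (u * v) v p n"
  unfolding etheta_poch_def by (subst prod.lessThan_Suc_shift) (simp add: mult.assoc)

lemma etheta_poch_eq_prod_Suc: "etheta_poch (u * v) v p n = (\<Prod>j<n. theta (u * v ^ Suc j) p)"
  by (simp add: etheta_poch_def mult.assoc)

lemma theta_addition_progression:
  assumes p: "norm p < 1"
    and nz: "a \<noteq> 0" "b \<noteq> 0" "c \<noteq> 0" "d \<noteq> 0" "q \<noteq> 0" "r \<noteq> 0" "s \<noteq> 0" "t \<noteq> 0"
  shows "theta (a * (r * s * t / q\<^sup>2) ^ k) p * theta (b * r ^ k) p * theta (c * s ^ k) p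
        * theta (a * d\<^sup>2 / (b * c) * t ^ k) p
      - theta (d * q ^ k) p * theta (a * d / b * (s * t / q) ^ k) p * theta (a * d / c * (r * t / q) ^ k) p
        * theta (b * c / d * (r * s / q) ^ k) p
      = d * q ^ k * (theta (a * d * (r * s * t / q) ^ k) p * theta (b * r ^ k / (d * q ^ k)) p
        * theta (c * s ^ k / (d * q ^ k)) p * theta (a * d * t ^ k / (b * c * q ^ k)) p)"
proof -
  have addition: "theta A p * theta B p * theta C p * theta x1 p - theta D p * theta x2 p * theta x3 p * theta x4 p
      = D * (theta y1 p * theta y2 p * theta y3 p * theta y4 p)"
    if "A \<noteq> 0" "B \<noteq> 0" "C \<noteq> 0" "D \<noteq> 0"
      and "x1 = A * D\<^sup>2 / (B * C)" "x2 = A * D / B" "x3 = A * D / C" "x4 = B * C / D"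
      and "y1 = A * D" "y2 = B / D" "y3 = C / D" "y4 = A * D / (B * C)"
    for A B C D x1 x2 x3 x4 y1 y2 y3 y4
    unfolding that(5-) by (rule theta_addition[OF p that(1-4)])
  show ?thesis
    by (rule addition)
      (use nz in \<open>simp_all add: power_mult_distrib power_divide field_simps power2_eq_square flip: power_mult\<close>)
qed

theorem mainTheorem10:
  fixes a b c d q r s t p :: complex and n :: nat
  assumes hp: "norm p < 1"
    and nz: "a \<noteq> 0" "b \<noteq> 0" "c \<noteq> 0" "d \<noteq> 0" "q \<noteq> 0" "r \<noteq> 0" "s \<noteq> 0" "t \<noteq> 0"
    and hden0: "theta (a * d) p * theta (b/d) p * theta (c/d) p * theta (a * d/(b * c)) p \<noteq> 0"
    and hdenk: "\<And>k. k \<le> n \<Longrightarrow>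
        etheta_poch (d * q) q p k * etheta_poch (a * d * s * t/(b * q)) (s * t/q) p k
        * etheta_poch (a * d * r * t/(c * q)) (r * t/q) p k * etheta_poch (b * c * r * s/(d * q)) (r * s/q) p k \<noteq> 0"
  shows "(\<Sum>k=0..n.
      (theta (a * d * (r * s * t/q)^k) p * theta (b * r^k/(d * q^k)) p * theta (c * s^k/(d * q^k)) p
         * theta (a * d * t^k/(b * c * q^k)) p)
      / (theta (a * d) p * theta (b/d) p * theta (c/d) p * theta (a * d/(b * c)) p)
      * ((etheta_poch a (r * s * t/q^2) p k * etheta_poch b r p k * etheta_poch c s p k
            * etheta_poch (a * d^2/(b * c)) t p k)
         / (etheta_poch (d * q) q p k * etheta_poch (a * d * s * t/(b * q)) (s * t/q) p k
            * etheta_poch (a * d * r * t/(c * q)) (r * t/q) p k * etheta_poch (b * c * r * s/(d * q)) (r * s/q) p k))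
      * q^k)
    = (theta a p * theta b p * theta c p * theta (a * d^2/(b * c)) p)
        / (d * (theta (a * d) p * theta (b/d) p * theta (c/d) p * theta (a * d/(b * c)) p))
      * ((etheta_poch (a * r * s * t/q^2) (r * s * t/q^2) p n * etheta_poch (b * r) r p n
            * etheta_poch (c * s) s p n * etheta_poch (a * d^2 * t/(b * c)) t p n)
         / (etheta_poch (d * q) q p n * etheta_poch (a * d * s * t/(b * q)) (s * t/q) p n
            * etheta_poch (a * d * r * t/(c * q)) (r * t/q) p n * etheta_poch (b * c * r * s/(d * q)) (r * s/q) p n))
      - (theta d p * theta (a * d/b) p * theta (a * d/c) p * theta (b * c/d) p)
        / (d * (theta (a * d) p * theta (b/d) p * theta (c/d) p * theta (a * d/(b * c)) p))"
proof -
  define x where "x k = theta (a * (r * s * t / q\<^sup>2) ^ k) p * theta (b * r ^ k) p * theta (c * s ^ k) p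
    * theta (a * d\<^sup>2 / (b * c) * t ^ k) p" for k
  define y where "y k = theta (d * q ^ k) p * theta (a * d / b * (s * t / q) ^ k) p
    * theta (a * d / c * (r * t / q) ^ k) p * theta (b * c / d * (r * s / q) ^ k) p" for k
  define Z where "Z k = theta (a * d * (r * s * t/q)^k) p * theta (b * r^k/(d * q^k)) p * theta (c * s^k/(d * q^k)) p
    * theta (a * d * t^k/(b * c * q^k)) p" for k
  define th0 where "th0 = theta (a * d) p * theta (b/d) p * theta (c/d) p * theta (a * d/(b * c)) p"
  have numer: "(\<Prod>j<k. x j) = etheta_poch a (r * s * t/q^2) p k * etheta_poch b r p k * etheta_poch c s p k
      * etheta_poch (a * d^2/(b * c)) t p k" for k
    by (simp add: x_def etheta_poch_def prod.distrib)
  have "a * d * s * t / (b * q) = a * d / b * (s * t / q)" "a * d * r * t / (c * q) = a * d / c * (r * t / q)"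
    "b * c * r * s / (d * q) = b * c / d * (r * s / q)"
    by simp_all
  then have denom: "(\<Prod>j<k. y (Suc j)) = etheta_poch (d * q) q p k * etheta_poch (a * d * s * t/(b * q)) (s * t/q) p k
      * etheta_poch (a * d * r * t/(c * q)) (r * t/q) p k * etheta_poch (b * c * r * s/(d * q)) (r * s/q) p k" for k
    by (simp only: etheta_poch_eq_prod_Suc y_def prod.distrib)
  have last: "(\<Prod>j\<le>n. x j) = theta a p * theta b p * theta c p * theta (a * d^2/(b * c)) p
      * (etheta_poch (a * r * s * t/q^2) (r * s * t/q^2) p n * etheta_poch (b * r) r p n
        * etheta_poch (c * s) s p n * etheta_poch (a * d^2 * t/(b * c)) t p n)"
    unfolding lessThan_Suc_atMost[symmetric] numer etheta_poch_Suc_shift by (simp add: mult_ac)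
  have step: "x k - y k = d * q ^ k * Z k" for k
    unfolding x_def y_def Z_def by (rule theta_addition_progression[OF hp nz])
  have telescoped: "(\<Sum>k\<le>n. d * q ^ k * Z k * (\<Prod>j<k. x j) / (\<Prod>j<k. y (Suc j)))
      = (\<Prod>j\<le>n. x j) / (\<Prod>j<n. y (Suc j)) - y 0"
    using hdenk[of n] by (intro telescoping_quotient_sum step) (simp add: denom)
  have "th0 \<noteq> 0"
    using hden0 by (simp add: th0_def)
  have "(\<Sum>k=0..n. Z k / th0 * ((\<Prod>j<k. x j) / (\<Prod>j<k. y (Suc j))) * q ^ k)
      = ((\<Prod>j\<le>n. x j) / (\<Prod>j<n. y (Suc j)) - y 0) / (d * th0)"
    unfolding telescoped[symmetric] atLeast0AtMost sum_divide_distrib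
    by (rule sum.cong) (use nz(4) \<open>th0 \<noteq> 0\<close> in \<open>simp_all add: field_simps\<close>)
  then show ?thesis
    unfolding numer denom last Z_def th0_def by (simp add: y_def diff_divide_distrib)
qed

end
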